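(* Let $B$ satisfy the standing assumptions below. Given $\xi_0\in\mathcal{M}$, set $R=2|\xi_0|_{\mathcal{M}}$. Then there exists $T_R^0>0$, depending only on $R$, such that, with $T=T_R^0$, the map $\Gamma$ satisfies $\Gamma(B_R)\subset B_R$, where $B_R$ is the set of all $\xi=(\xi_t)_{t\in[0,T]}\in C([0,T];\mathcal{M})$ with $\sup_{t\in[0,T]}|\xi_t|_{\mathcal{M}}\le R$. The same holds if $B_R$ is instead defined as the set of $\xi\in C([0,T];\mathcal{M}_w)$ with $\sup_{t\in[0,T]}\|\xi_t\|\le R$.
   Context: $\mathcal{M}$ is the dual of $C_b(\mathbb{R}^d;\mathbb{R}^d)$ (bounded continuous vector fields, sup norm $\|\cdot\|_\infty$) with dual norm $|\xi|_{\mathcal{M}}=\sup_{\|\theta\|_\infty\le1}|\xi(\theta)|$. Weak norm: $\|\xi\|=\sup\{\xi(\theta):\|\theta\|_\infty+\mathrm{Lip}(\theta)\le1\}$; $\mathcal{M}_w$ is $\mathcal{M}$ with metric $d(\xi,\xi')=\|\xi-\xi'\|$. Standing assumptions: $B:\mathcal{M}_w\to C_b^2(\mathbb{R}^d,\mathbb{R}^d)$ is continuous and there is $C_B>0$ with, for all $\xi,\xi'$: $\|B(\xi)\|_{C_b^2}\le C_B(\|\xi\|+1)$, $\|B(\xi)-B(\xi')\|_\infty\le C_B\|\xi-\xi'\|$, $\|DB(\xi)-DB(\xi')\|_\infty\le C_B\|\xi-\xi'\|$ ($D$ the spatial derivative, $\|\cdot\|_{C^2_b}$ the sum of sup norms of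 the field and its first two derivatives). For $\xi\in C([0,T];\mathcal{M}_w)$, $\varphi^{t,B(\xi)}$ is the flow of $\frac{dx_t}{dt}=B(\xi_t)(x_t)$ with $\varphi^{0,B(\xi)}=\mathrm{id}$. Push-forward: for a $C^1$ map $\varphi$, $(\varphi_\sharp\theta)(x)=D\varphi(x)^T\theta(\varphi(x))$ and $(\varphi_\sharp\xi)(\theta)=\xi(\varphi_\sharp\theta)$. The map $\Gamma$ sends $\xi\in C([0,T];\mathcal{M}_w)$ to $\Gamma(\xi)=(\eta_t)_{t\in[0,T]}$ with $\eta_t=\varphi^{t,B(\xi)}_\sharp\xi_0$. *)

theory Defs
  imports "HOL-Analysis.Analysis"
begin

text \<open>Bounded continuous vector fields on R^d with the sup norm; M is the space of bounded linear functionals on them, with the dual norm.\<close>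



type_synonym 'd meas = "((real^'d) \<Rightarrow>\<^sub>C (real^'d)) \<Rightarrow>\<^sub>L real"

definition weak_norm :: "('d::finite) meas \<Rightarrow> real" where
  "weak_norm \<xi> = (SUP \<theta> \<in> {\<theta>. \<exists>L. L-lipschitz_on UNIV (apply_bcontfun \<theta>) \<and> norm \<theta> + L \<le> 1}.
                      blinfun_apply \<xi> \<theta>)"

definition supn :: "(real^'d \<Rightarrow> 'b::real_normed_vector) \<Rightarrow> real" where
  "supn f = (SUP x. norm (f x))"

definition standing :: "(('d::finite) meas \<Rightarrow> real^'d \<Rightarrow> real^'d) \<Rightarrow> bool" where
  "standing B \<longleftrightarrow> (\<exists>C\<^sub>B DB D2B.
     C\<^sub>B > 0 \<and>
     (\<forall>\<xi> x. (B \<xi> has_derivative blinfun_apply (DB \<xi> x)) (at x)) \<and>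
     (\<forall>\<xi> x. (DB \<xi> has_derivative blinfun_apply (D2B \<xi> x)) (at x)) \<and>
     (\<forall>\<xi>. continuous_on UNIV (D2B \<xi>)) \<and>
     (\<forall>\<xi>. bounded (range (B \<xi>)) \<and> bounded (range (DB \<xi>)) \<and> bounded (range (D2B \<xi>))) \<and>
     (\<forall>\<xi>. supn (B \<xi>) + supn (DB \<xi>) + supn (D2B \<xi>) \<le> C\<^sub>B * (weak_norm \<xi> + 1)) \<and>
     (\<forall>\<xi> \<xi>'. supn (\<lambda>x. B \<xi> x - B \<xi>' x) \<le> C\<^sub>B * weak_norm (\<xi> - \<xi>')) \<and>
     (\<forall>\<xi> \<xi>'. supn (\<lambda>x. DB \<xi> x - DB \<xi>' x) \<le> C\<^sub>B * weak_norm (\<xi> - \<xi>')) \<and>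
     (\<forall>\<xi> \<epsilon>. \<epsilon> > 0 \<longrightarrow> (\<exists>\<delta>>0. \<forall>\<xi>'. weak_norm (\<xi>' - \<xi>) < \<delta> \<longrightarrow>
          supn (\<lambda>x. B \<xi>' x - B \<xi> x) + supn (\<lambda>x. DB \<xi>' x - DB \<xi> x)
            + supn (\<lambda>x. D2B \<xi>' x - D2B \<xi> x) < \<epsilon>)))"

definition weak_cont :: "real \<Rightarrow> (real \<Rightarrow> ('d::finite) meas) \<Rightarrow> bool" where
  "weak_cont T \<xi> \<longleftrightarrow> (\<forall>t\<in>{0..T}. \<forall>\<epsilon>>0. \<exists>\<delta>>0. \<forall>s\<in>{0..T}.
       \<bar>s - t\<bar> < \<delta> \<longrightarrow> weak_norm (\<xi> s - \<xi> t) < \<epsilon>)"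

definition is_flow :: "(('d::finite) meas \<Rightarrow> real^'d \<Rightarrow> real^'d) \<Rightarrow> (real \<Rightarrow> 'd meas) \<Rightarrow> real
     \<Rightarrow> (real \<Rightarrow> real^'d \<Rightarrow> real^'d) \<Rightarrow> bool" where
  "is_flow B \<xi> T \<phi> \<longleftrightarrow> (\<forall>x. \<phi> 0 x = x \<and>
     (\<forall>t\<in>{0..T}. ((\<lambda>s. \<phi> s x) has_vector_derivative B (\<xi> t) (\<phi> t x)) (at t within {0..T})))"

definition flow :: "(('d::finite) meas \<Rightarrow> real^'d \<Rightarrow> real^'d) \<Rightarrow> (real \<Rightarrow> 'd meas) \<Rightarrow> real
     \<Rightarrow> real \<Rightarrow> real^'d \<Rightarrow> real^'d" where
  "flow B \<xi> T = (SOME \<phi>. is_flow B \<xi> T \<phi>)"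

definition push_field :: "(real^'d \<Rightarrow> real^'d) \<Rightarrow> ((real^'d) \<Rightarrow>\<^sub>C (real^'d)) \<Rightarrow> ((real^'d::finite) \<Rightarrow>\<^sub>C (real^'d))" where
  "push_field \<phi> \<theta> = Bcontfun (\<lambda>x. transpose (jacobian \<phi> (at x)) *v apply_bcontfun \<theta> (\<phi> x))"

definition push_meas :: "(real^'d \<Rightarrow> real^'d) \<Rightarrow> ('d::finite) meas \<Rightarrow> 'd meas" where
  "push_meas \<phi> \<xi> = Blinfun (\<lambda>\<theta>. blinfun_apply \<xi> (push_field \<phi> \<theta>))"

definition Gamma :: "(('d::finite) meas \<Rightarrow> real^'d \<Rightarrow> real^'d) \<Rightarrow> real \<Rightarrow> 'd meas
     \<Rightarrow> (real \<Rightarrow> 'd meas) \<Rightarrow> real \<Rightarrow> 'd meas" where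
  "Gamma B T \<xi>0 \<xi> = (\<lambda>t. push_meas (flow B \<xi> T t) \<xi>0)"

text \<open>Balls: curves in C([0,T];M_w) bounded by R in |.|_M (strong) resp. in the weak norm.\<close>
definition ball_strong :: "real \<Rightarrow> real \<Rightarrow> (real \<Rightarrow> ('d::finite) meas) \<Rightarrow> bool" where
  "ball_strong T R \<xi> \<longleftrightarrow> weak_cont T \<xi> \<and> (\<forall>t\<in>{0..T}. norm (\<xi> t) \<le> R)"

definition ball_weak :: "real \<Rightarrow> real \<Rightarrow> (real \<Rightarrow> ('d::finite) meas) \<Rightarrow> bool" where
  "ball_weak T R \<xi> \<longleftrightarrow> weak_cont T \<xi> \<and> (\<forall>t\<in>{0..T}. weak_norm (\<xi> t) \<le> R)"

end

theory Submission
  imports Defs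
begin

text \<open>For \<open>\<xi>\<close> in a weak ball of radius \<open>R\<close>, the standing assumptions bound the field \<open>B(\<xi>\<^sub>t)\<close> and
  its first two spatial derivatives by \<open>K = C\<^sub>B (|R| + 1)\<close>. On the horizon \<open>T = 1/(2K)\<close> every integral
  inequality for the flow closes by absorbing half of its own supremum; in particular the Jacobian
  of \<open>\<phi>\<^sup>t\<close> has norm at most \<open>2\<close>. Hence the pulled-back test field \<open>D\<phi>\<^sup>T \<theta>\<circ>\<phi>\<close> has sup norm at most
  \<open>2\<parallel>\<theta>\<parallel>\<^sub>\<infinity>\<close>, and \<open>|\<Gamma>(\<xi>)\<^sub>t|\<^sub>\<M> \<le> 2|\<xi>\<^sub>0|\<^sub>\<M> = R\<close>. Weak continuity of \<open>t \<mapsto> \<Gamma>(\<xi>)\<^sub>t\<close> follows from the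
  Lipschitz dependence of \<open>\<phi>\<^sup>t\<close> and \<open>D\<phi>\<^sup>t\<close> on \<open>t\<close>, tested against Lipschitz fields. As the weak norm
  is dominated by \<open>|.|\<^sub>\<M>\<close>, the same \<open>T\<close> serves both balls.\<close>

section \<open>Integral equations on short intervals\<close>

text \<open>This replaces Gronwall's inequality: apply the hypothesis with \<open>S\<close> the maximum of \<open>|g|\<close>.\<close>

lemma norm_le_half_sup_absorb:
  fixes g :: "real \<Rightarrow> 'a::real_normed_vector"
  assumes "continuous_on {0..T} g" "0 \<le> T"
    and absorb: "\<And>S t. 0 \<le> S \<Longrightarrow> (\<And>s. s \<in> {0..T} \<Longrightarrow> norm (g s) \<le> S) \<Longrightarrow> t \<in> {0..T}
      \<Longrightarrow> norm (g t) \<le> a + S/2"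
    and t: "t \<in> {0..T}"
  shows "norm (g t) \<le> 2 * a"
proof -
  have "compact ((\<lambda>s. norm (g s)) ` {0..T})"
    by (intro compact_continuous_image continuous_intros assms) auto
  moreover have "(\<lambda>s. norm (g s)) ` {0..T} \<noteq> {}" using assms by auto
  ultimately obtain s0 where s0: "s0 \<in> {0..T}" and max: "\<And>s. s \<in> {0..T} \<Longrightarrow> norm (g s) \<le> norm (g s0)"
    using compact_attains_sup[of "(\<lambda>s. norm (g s)) ` {0..T}"] by auto
  have "norm (g s0) \<le> a + norm (g s0) / 2" using absorb[OF norm_ge_zero max s0] .
  then show ?thesis using max[OF t] by simp
qed

lemma short_time_factor_le_half:
  fixes L S T t :: real
  assumes "0 \<le> L" "L * T \<le> 1/2" "0 \<le> S" "t \<in> {0..T}"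
  shows "L * S * t \<le> S / 2"
proof -
  have "L * S * t \<le> L * S * T" using assms by (intro mult_left_mono) auto
  also have "\<dots> = S * (L * T)" by simp
  also have "\<dots> \<le> S * (1/2)" using assms by (intro mult_left_mono) auto
  finally show ?thesis by simp
qed

lemma norm_integral_upto_le:
  fixes f :: "real \<Rightarrow> 'a::banach"
  assumes "continuous_on {0..T} f" "t \<in> {0..T}" "\<And>s. s \<in> {0..t} \<Longrightarrow> norm (f s) \<le> c"
  shows "norm (integral {0..t} f) \<le> c * t"
proof -
  have "continuous_on {0..t} f" using assms(2) by (intro continuous_on_subset[OF assms(1)]) auto
  then show ?thesis using integral_bound[of 0 t f c] assms by auto
qed

lemma integral_upto_diff:
  fixes f g :: "real \<Rightarrow> 'a::banach"
  assumes "continuous_on {0..T} f" "continuous_on {0..T} g" "t \<in> {0..T}"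
  shows "integral {0..t} f - integral {0..t} g = integral {0..t} (\<lambda>s. f s - g s)"
proof -
  have "continuous_on {0..t} f" "continuous_on {0..t} g" using assms
    by (auto intro: continuous_on_subset)
  then show ?thesis
    by (intro integral_diff[symmetric] integrable_continuous_interval)
qed

lemma norm_integral_upto_increment_le:
  fixes f :: "real \<Rightarrow> 'a::banach"
  assumes f: "continuous_on {0..T} f" and "s \<in> {0..T}" "t \<in> {0..T}"
    and c: "\<And>u. u \<in> {0..T} \<Longrightarrow> norm (f u) \<le> c"
  shows "norm (integral {0..t} f - integral {0..s} f) \<le> c * \<bar>t - s\<bar>"
proof -
  have increment: "norm (integral {0..b} f - integral {0..a} f) \<le> c * (b - a)"
    if "a \<in> {0..T}" "b \<in> {0..T}" "a \<le> b" for a b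
  proof -
    have "continuous_on {0..b} f" using that by (auto intro: continuous_on_subset[OF f])
    then have "integral {0..a} f + integral {a..b} f = integral {0..b} f"
      using that by (intro Henstock_Kurzweil_Integration.integral_combine integrable_continuous_interval) auto
    then have "integral {0..b} f - integral {0..a} f = integral {a..b} f" by (metis add_diff_cancel_left')
    moreover have "norm (integral {a..b} f) \<le> c * (b - a)"
      using that c by (intro integral_bound continuous_on_subset[OF f]) auto
    ultimately show ?thesis by (simp add: algebra_simps)
  qed
  show ?thesis
  proof (cases "s \<le> t")
    case False
    then show ?thesis using increment[of t s] assms by (simp add: norm_minus_commute)
  qed (use increment[of s t] assms in simp)
qed

lemma blinfun_apply_integral_upto:
  fixes f :: "real \<Rightarrow> 'a::real_normed_vector \<Rightarrow>\<^sub>L 'b::banach"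
  assumes "continuous_on {0..T} f" "t \<in> {0..T}"
  shows "blinfun_apply (integral {0..t} f) v = integral {0..t} (\<lambda>s. blinfun_apply (f s) v)"
proof -
  have "f integrable_on {0..t}"
    using assms by (intro integrable_continuous_interval continuous_on_subset[OF assms(1)]) auto
  from integral_linear[OF this, of "\<lambda>m. blinfun_apply m v"]
  show ?thesis by (simp add: blinfun.bounded_linear_left o_def)
qed

text \<open>When \<open>L T \<le> 1/2\<close> the Picard map is a \<open>1/2\<close>-contraction for the plain sup norm. Clamping to
  \<open>[0,T]\<close> makes it a self-map of the complete space of bounded continuous functions on the line.\<close>

lemma integral_equation_solvable:
  fixes F :: "real \<Rightarrow> 'a::banach \<Rightarrow> 'a"
  assumes T: "0 \<le> T" and L: "0 \<le> L" "L * T \<le> 1/2"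
    and lip: "\<And>s u v. s \<in> {0..T} \<Longrightarrow> norm (F s u - F s v) \<le> L * norm (u - v)"
    and cont: "\<And>y. continuous_on {0..T} y \<Longrightarrow> continuous_on {0..T} (\<lambda>s. F s (y s))"
  shows "\<exists>y. continuous_on {0..T} y \<and> (\<forall>t\<in>{0..T}. y t = y0 + integral {0..t} (\<lambda>s. F s (y s)))"
proof -
  define h where "h g t = y0 + integral {0..t} (\<lambda>s. F s (g s))" for g :: "real \<Rightarrow> 'a" and t
  have h_cont: "continuous_on {0..T} (h g)" if "continuous_on {0..T} g" for g
    unfolding h_def
    by (intro continuous_intros indefinite_integral_continuous_1 integrable_continuous_interval cont that)
  have clamp_in: "clamp 0 T t \<in> {0..T}" for t
    using clamp_in_interval[of 0 T t] T by (simp add: cbox_interval)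
  define P where "P g = Bcontfun (\<lambda>t. h (apply_bcontfun g) (clamp 0 T t))" for g :: "real \<Rightarrow>\<^sub>C 'a"
  have P_apply: "apply_bcontfun (P g) = (\<lambda>t. h (apply_bcontfun g) (clamp 0 T t))" for g
  proof -
    obtain e :: "real \<Rightarrow>\<^sub>C 'a" where "\<And>t. e t = h (apply_bcontfun g) (clamp 0 T t)"
      using continuous_on_cbox_bcontfunE[of 0 T "h (apply_bcontfun g)"] h_cont
      by (auto simp: cbox_interval)
    then have "(\<lambda>t. h (apply_bcontfun g) (clamp 0 T t)) = apply_bcontfun e" by auto
    then have "(\<lambda>t. h (apply_bcontfun g) (clamp 0 T t)) \<in> bcontfun"
      using apply_bcontfun by metis
    then show ?thesis unfolding P_def by (rule Bcontfun_inverse)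
  qed
  have "dist (P g1) (P g2) \<le> (1/2) * dist g1 g2" for g1 g2
  proof (rule dist_bound)
    fix t
    let ?c = "clamp 0 T t"
    have Fg: "continuous_on {0..T} (\<lambda>s. F s (g s))" for g :: "real \<Rightarrow>\<^sub>C 'a" by (auto intro!: cont)
    have "dist (P g1 t) (P g2 t) = norm (integral {0..?c} (\<lambda>s. F s (g1 s) - F s (g2 s)))"
      by (simp add: P_apply h_def dist_norm integral_upto_diff[OF Fg Fg clamp_in])
    also have "\<dots> \<le> (L * dist g1 g2) * ?c"
    proof (rule norm_integral_upto_le[OF _ clamp_in])
      show "continuous_on {0..T} (\<lambda>s. F s (g1 s) - F s (g2 s))" using Fg by (intro continuous_intros)
      fix s assume "s \<in> {0..?c}"
      then have "norm (F s (g1 s) - F s (g2 s)) \<le> L * norm (g1 s - g2 s)"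
        using clamp_in[of t] by (intro lip) auto
      also have "\<dots> \<le> L * dist g1 g2" using dist_bounded[of g1 s g2] L by (intro mult_left_mono) (auto simp: dist_norm)
      finally show "norm (F s (g1 s) - F s (g2 s)) \<le> L * dist g1 g2" .
    qed
    also have "\<dots> \<le> dist g1 g2 / 2"
      using short_time_factor_le_half[OF L zero_le_dist clamp_in] by (simp add: mult.assoc)
    finally show "dist (P g1 t) (P g2 t) \<le> (1/2) * dist g1 g2" by simp
  qed
  then obtain g where g: "P g = g" using banach_fix_type[of "1/2" P] by auto
  show ?thesis
  proof (intro exI conjI ballI)
    fix t assume t: "t \<in> {0..T}"
    have "clamp 0 T t = t" using clamp_cancel_cbox[of t 0 T] t by (simp add: cbox_interval)
    have "g t = P g t" using g by simp
    also have "\<dots> = h g t" using \<open>clamp 0 T t = t\<close> by (simp only: P_apply)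
    finally have "g t = h g t" .
    then show "g t = y0 + integral {0..t} (\<lambda>s. F s (g s))" by (simp add: h_def)
  qed auto
qed

lemma integral_equation_unique:
  fixes F :: "real \<Rightarrow> 'a::banach \<Rightarrow> 'a"
  assumes T: "0 \<le> T" and L: "0 \<le> L" "L * T \<le> 1/2"
    and lip: "\<And>s u v. s \<in> {0..T} \<Longrightarrow> norm (F s u - F s v) \<le> L * norm (u - v)"
    and cont: "\<And>y. continuous_on {0..T} y \<Longrightarrow> continuous_on {0..T} (\<lambda>s. F s (y s))"
    and y: "continuous_on {0..T} y" "\<And>t. t \<in> {0..T} \<Longrightarrow> y t = y0 + integral {0..t} (\<lambda>s. F s (y s))"
    and z: "continuous_on {0..T} z" "\<And>t. t \<in> {0..T} \<Longrightarrow> z t = y0 + integral {0..t} (\<lambda>s. F s (z s))"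
    and t: "t \<in> {0..T}"
  shows "y t = z t"
proof -
  have "norm (y t - z t) \<le> 2 * 0"
  proof (rule norm_le_half_sup_absorb[OF _ T _ t])
    show "continuous_on {0..T} (\<lambda>t. y t - z t)" using y z by (intro continuous_intros)
    fix S t assume "0 \<le> S" and S: "\<And>s. s \<in> {0..T} \<Longrightarrow> norm (y s - z s) \<le> S" and t: "t \<in> {0..T}"
    have "norm (y t - z t) = norm (integral {0..t} (\<lambda>s. F s (y s) - F s (z s)))"
      using y(2)[OF t] z(2)[OF t] integral_upto_diff[OF cont[OF y(1)] cont[OF z(1)] t] by simp
    also have "\<dots> \<le> (L * S) * t"
    proof (rule norm_integral_upto_le[OF _ t])
      show "continuous_on {0..T} (\<lambda>s. F s (y s) - F s (z s))" using cont y z by (intro continuous_intros)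
      fix s assume "s \<in> {0..t}"
      then have s: "s \<in> {0..T}" using t by auto
      show "norm (F s (y s) - F s (z s)) \<le> L * S"
        using lip[OF s, of "y s" "z s"] S[OF s] L by (meson mult_left_mono order_trans)
    qed
    also have "\<dots> \<le> S / 2"
      by (rule short_time_factor_le_half[OF L \<open>0 \<le> S\<close> t])
    finally show "norm (y t - z t) \<le> 0 + S/2" by simp
  qed
  then show ?thesis by simp
qed

section \<open>Flow of a time-dependent vector field\<close>

lemma continuous_on_compose_uniformly_in_time:
  fixes G :: "real \<Rightarrow> 'a::real_normed_vector \<Rightarrow> 'b::real_normed_vector"
  assumes K: "0 \<le> K"
    and lip: "\<And>s u v. s \<in> S \<Longrightarrow> norm (G s u - G s v) \<le> K * norm (u - v)"
    and unif: "\<And>s0 e. s0 \<in> S \<Longrightarrow> e > 0 \<Longrightarrow> \<exists>d>0. \<forall>s\<in>S. \<bar>s - s0\<bar> < d \<longrightarrow> (\<forall>u. norm (G s u - G s0 u) \<le> e)"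
    and y: "continuous_on S y"
  shows "continuous_on S (\<lambda>s. G s (y s))"
  unfolding continuous_on_iff
proof (intro ballI allI impI)
  fix s0 e assume s0: "s0 \<in> S" and e: "(0::real) < e"
  obtain d1 where d1: "d1 > 0" "\<forall>s\<in>S. \<bar>s - s0\<bar> < d1 \<longrightarrow> (\<forall>u. norm (G s u - G s0 u) \<le> e/2)"
    using unif[OF s0, of "e/2"] e by auto
  have "e / (2 * (K + 1)) > 0" using e K by simp
  then obtain d2 where d2: "d2 > 0" "\<forall>s\<in>S. dist s s0 < d2 \<longrightarrow> dist (y s) (y s0) < e / (2 * (K + 1))"
    using y s0 unfolding continuous_on_iff by blast
  show "\<exists>d>0. \<forall>s\<in>S. dist s s0 < d \<longrightarrow> dist (G s (y s)) (G s0 (y s0)) < e"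
  proof (intro exI[of _ "min d1 d2"] conjI ballI impI)
    fix s assume s: "s \<in> S" "dist s s0 < min d1 d2"
    have time: "norm (G s (y s) - G s0 (y s)) \<le> e/2" using d1 s by (auto simp: dist_real_def)
    have "norm (G s0 (y s) - G s0 (y s0)) \<le> K * norm (y s - y s0)" using lip[OF s0] .
    also have "\<dots> \<le> K * (e / (2 * (K + 1)))" using d2 s K by (intro mult_left_mono) (auto simp: dist_norm)
    also have "\<dots> < e/2" using K e by (simp add: field_simps)
    finally have space: "norm (G s0 (y s) - G s0 (y s0)) < e/2" .
    have "dist (G s (y s)) (G s0 (y s0)) \<le> norm (G s (y s) - G s0 (y s)) + norm (G s0 (y s) - G s0 (y s0))"
      unfolding dist_norm by (rule order_trans[OF _ norm_triangle_ineq]) simp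
    then show "dist (G s (y s)) (G s0 (y s0)) < e" using time space by simp
  qed (use d1 d2 in auto)
qed

lemma norm_diff_le_of_derivative_bound:
  fixes f :: "'a::real_normed_vector \<Rightarrow> 'b::real_normed_vector"
  assumes "\<And>x. (f has_derivative blinfun_apply (D x)) (at x)" "\<And>x. norm (D x) \<le> K"
  shows "norm (f x - f y) \<le> K * norm (x - y)"
  by (rule differentiable_bound[where S=UNIV and f'="\<lambda>x. blinfun_apply (D x)"])
    (use assms in \<open>auto simp: norm_blinfun.rep_eq[symmetric]\<close>)

lemma norm_linearization_error_le:
  fixes f :: "'a::real_normed_vector \<Rightarrow> 'b::real_normed_vector"
  assumes der: "\<And>x. (f has_derivative blinfun_apply (D x)) (at x)"
    and D_lip: "\<And>x y. norm (D x - D y) \<le> K * norm (x - y)" and K: "0 \<le> K"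
  shows "norm (f b - f a - D a (b - a)) \<le> K * norm (b - a) ^ 2"
proof -
  let ?S = "cball a (norm (b - a))"
  have "norm (f b - f a - blinfun_apply (D a) (b - a)) \<le> norm (b - a) * (K * norm (b - a))"
  proof (rule differentiable_bound_linearization[where S = ?S and f' = "\<lambda>x. blinfun_apply (D x)"])
    fix t :: real assume "t \<in> {0..1}"
    then show "a + t *\<^sub>R (b - a) \<in> ?S" by (auto simp: dist_norm mult_left_le_one_le)
  next
    fix x assume x: "x \<in> ?S"
    have "onorm (blinfun_apply (D x) - blinfun_apply (D a)) = norm (D x - D a)"
      by (simp add: norm_blinfun.rep_eq minus_blinfun.rep_eq fun_diff_def)
    also have "\<dots> \<le> K * norm (b - a)"
      using x K D_lip[of x a] by (smt (verit) dist_norm mem_cball mult_left_mono norm_minus_commute)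
    finally show "onorm (blinfun_apply (D x) - blinfun_apply (D a)) \<le> K * norm (b - a)" .
  qed (auto intro: has_derivative_at_withinI der)
  then show ?thesis by (simp add: power2_eq_square algebra_simps)
qed

lemma norm_blinfun_compose_diff_le: "norm ((a o\<^sub>L u) - (a o\<^sub>L v)) \<le> norm a * norm (u - v)"
proof -
  have "(a o\<^sub>L u) - (a o\<^sub>L v) = a o\<^sub>L (u - v)"
    by (rule blinfun_eqI) (simp add: blinfun.diff_right blinfun.diff_left)
  then show ?thesis by (simp add: norm_blinfun_compose)
qed

text \<open>Continuity in time is asked uniformly in space: this is what the Lipschitz dependence of
  \<open>B\<close> on \<open>\<xi>\<close> in the weak norm provides.\<close>

locale time_dependent_field =
  fixes V :: "real \<Rightarrow> 'a::banach \<Rightarrow> 'a"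
    and DV :: "real \<Rightarrow> 'a \<Rightarrow> 'a \<Rightarrow>\<^sub>L 'a"
    and K T :: real
  assumes K_nonneg: "0 \<le> K" and T_nonneg: "0 \<le> T" and short_time: "K * T \<le> 1/2"
    and V_bound: "\<And>s x. s \<in> {0..T} \<Longrightarrow> norm (V s x) \<le> K"
    and DV_bound: "\<And>s x. s \<in> {0..T} \<Longrightarrow> norm (DV s x) \<le> K"
    and V_derivative: "\<And>s x. s \<in> {0..T} \<Longrightarrow> (V s has_derivative blinfun_apply (DV s x)) (at x)"
    and DV_lipschitz: "\<And>s x y. s \<in> {0..T} \<Longrightarrow> norm (DV s x - DV s y) \<le> K * norm (x - y)"
    and V_uniformly_continuous: "\<And>s0 e. s0 \<in> {0..T} \<Longrightarrow> e > 0 \<Longrightarrow>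
      \<exists>d>0. \<forall>s\<in>{0..T}. \<bar>s - s0\<bar> < d \<longrightarrow> (\<forall>u. norm (V s u - V s0 u) \<le> e)"
    and DV_uniformly_continuous: "\<And>s0 e. s0 \<in> {0..T} \<Longrightarrow> e > 0 \<Longrightarrow>
      \<exists>d>0. \<forall>s\<in>{0..T}. \<bar>s - s0\<bar> < d \<longrightarrow> (\<forall>u. norm (DV s u - DV s0 u) \<le> e)"
begin

lemma V_lipschitz: "s \<in> {0..T} \<Longrightarrow> norm (V s x - V s y) \<le> K * norm (x - y)"
  by (rule norm_diff_le_of_derivative_bound[OF V_derivative DV_bound])

lemma continuous_on_V_along:
  "continuous_on {0..T} y \<Longrightarrow> continuous_on {0..T} (\<lambda>s. V s (y s))"
  by (rule continuous_on_compose_uniformly_in_time[OF K_nonneg V_lipschitz V_uniformly_continuous])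

lemma continuous_on_DV_along:
  "continuous_on {0..T} y \<Longrightarrow> continuous_on {0..T} (\<lambda>s. DV s (y s))"
  by (rule continuous_on_compose_uniformly_in_time[OF K_nonneg DV_lipschitz DV_uniformly_continuous])

definition trajectory :: "'a \<Rightarrow> real \<Rightarrow> 'a" where
  "trajectory x = (SOME y. continuous_on {0..T} y \<and>
     (\<forall>t\<in>{0..T}. y t = x + integral {0..t} (\<lambda>s. V s (y s))))"

lemma trajectory_solves:
  "continuous_on {0..T} (trajectory x) \<and>
   (\<forall>t\<in>{0..T}. trajectory x t = x + integral {0..t} (\<lambda>s. V s (trajectory x s)))"
proof -
  have "\<exists>y. continuous_on {0..T} y \<and> (\<forall>t\<in>{0..T}. y t = x + integral {0..t} (\<lambda>s. V s (y s)))"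
    by (rule integral_equation_solvable[where L=K])
      (use T_nonneg K_nonneg short_time V_lipschitz continuous_on_V_along in auto)
  then show ?thesis unfolding trajectory_def by (rule someI_ex)
qed

lemma continuous_on_trajectory: "continuous_on {0..T} (trajectory x)"
  using trajectory_solves by blast

lemma trajectory_eq: "t \<in> {0..T} \<Longrightarrow> trajectory x t = x + integral {0..t} (\<lambda>s. V s (trajectory x s))"
  using trajectory_solves by blast

lemma continuous_on_V_trajectory: "continuous_on {0..T} (\<lambda>s. V s (trajectory x s))"
  by (rule continuous_on_V_along[OF continuous_on_trajectory])

lemma trajectory_unique:
  assumes "continuous_on {0..T} y" "\<And>t. t \<in> {0..T} \<Longrightarrow> y t = x + integral {0..t} (\<lambda>s. V s (y s))"
    and "t \<in> {0..T}"
  shows "y t = trajectory x t"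
  by (rule integral_equation_unique[where L=K and F=V, OF T_nonneg K_nonneg short_time
        V_lipschitz continuous_on_V_along assms(1,2) continuous_on_trajectory trajectory_eq assms(3)])

text \<open>The candidate derivative of \<open>x \<mapsto> trajectory x t\<close>: the solution of the variational equation
  \<open>m' = DV s (trajectory x s) \<circ> m\<close>, \<open>m 0 = id\<close>.\<close>

definition linearized :: "'a \<Rightarrow> real \<Rightarrow> 'a \<Rightarrow>\<^sub>L 'a" where
  "linearized x = (SOME m. continuous_on {0..T} m \<and>
     (\<forall>t\<in>{0..T}. m t = id_blinfun + integral {0..t} (\<lambda>s. DV s (trajectory x s) o\<^sub>L m s)))"

lemma linearized_solves:
  "continuous_on {0..T} (linearized x) \<and>
   (\<forall>t\<in>{0..T}. linearized x t = id_blinfun + integral {0..t} (\<lambda>s. DV s (trajectory x s) o\<^sub>L linearized x s))"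
proof -
  have "\<exists>m. continuous_on {0..T} m \<and>
     (\<forall>t\<in>{0..T}. m t = id_blinfun + integral {0..t} (\<lambda>s. DV s (trajectory x s) o\<^sub>L m s))"
  proof (rule integral_equation_solvable[where L=K])
    fix s u v assume s: "s \<in> {0..T}"
    show "norm ((DV s (trajectory x s) o\<^sub>L u) - (DV s (trajectory x s) o\<^sub>L v)) \<le> K * norm (u - v)"
      using norm_blinfun_compose_diff_le[of "DV s (trajectory x s)" u v] DV_bound[OF s, of "trajectory x s"]
      by (meson mult_right_mono norm_ge_zero order_trans)
  next
    fix y :: "real \<Rightarrow> 'a \<Rightarrow>\<^sub>L 'a" assume "continuous_on {0..T} y"
    then show "continuous_on {0..T} (\<lambda>s. DV s (trajectory x s) o\<^sub>L y s)"
      using continuous_on_DV_along[OF continuous_on_trajectory] by (intro continuous_intros)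
  qed (use T_nonneg K_nonneg short_time in auto)
  then show ?thesis unfolding linearized_def by (rule someI_ex)
qed

lemma continuous_on_linearized: "continuous_on {0..T} (linearized x)"
  using linearized_solves by blast

lemma linearized_eq:
  "t \<in> {0..T} \<Longrightarrow> linearized x t = id_blinfun + integral {0..t} (\<lambda>s. DV s (trajectory x s) o\<^sub>L linearized x s)"
  using linearized_solves by blast

lemma continuous_on_linearized_integrand:
  "continuous_on {0..T} (\<lambda>s. DV s (trajectory x s) o\<^sub>L linearized x s)"
  using continuous_on_DV_along[OF continuous_on_trajectory] continuous_on_linearized
  by (intro continuous_intros)

lemma norm_DV_compose_le: "s \<in> {0..T} \<Longrightarrow> norm (DV s y o\<^sub>L m) \<le> K * norm m"
  using norm_blinfun_compose[of "DV s y" m] mult_right_mono[OF DV_bound norm_ge_zero] by (rule order_trans)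

lemma trajectory_time_lipschitz:
  assumes "s \<in> {0..T}" "t \<in> {0..T}"
  shows "norm (trajectory x t - trajectory x s) \<le> K * \<bar>t - s\<bar>"
  using norm_integral_upto_increment_le[OF continuous_on_V_trajectory assms V_bound]
  by (simp add: trajectory_eq[OF assms(1)] trajectory_eq[OF assms(2)])

lemma norm_linearized_le:
  assumes "t \<in> {0..T}"
  shows "norm (linearized x t) \<le> 2"
proof -
  have "norm (linearized x t) \<le> 2 * 1"
  proof (rule norm_le_half_sup_absorb[OF continuous_on_linearized T_nonneg _ assms])
    fix S t assume "0 \<le> S" and S: "\<And>s. s \<in> {0..T} \<Longrightarrow> norm (linearized x s) \<le> S" and t: "t \<in> {0..T}"
    have "norm (integral {0..t} (\<lambda>s. DV s (trajectory x s) o\<^sub>L linearized x s)) \<le> (K * S) * t"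
    proof (rule norm_integral_upto_le[OF continuous_on_linearized_integrand t])
      fix s assume "s \<in> {0..t}"
      then have s: "s \<in> {0..T}" using t by auto
      show "norm (DV s (trajectory x s) o\<^sub>L linearized x s) \<le> K * S"
        using norm_DV_compose_le[OF s] mult_left_mono[OF S[OF s] K_nonneg] by (rule order_trans)
    qed
    also have "\<dots> \<le> S / 2" by (rule short_time_factor_le_half[OF K_nonneg short_time \<open>0 \<le> S\<close> t])
    finally have "norm (integral {0..t} (\<lambda>s. DV s (trajectory x s) o\<^sub>L linearized x s)) \<le> S / 2" .
    moreover have "norm (linearized x t) \<le> norm (id_blinfun :: 'a \<Rightarrow>\<^sub>L 'a)
        + norm (integral {0..t} (\<lambda>s. DV s (trajectory x s) o\<^sub>L linearized x s))"
      by (subst linearized_eq[OF t]) (rule norm_triangle_ineq)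
    ultimately show "norm (linearized x t) \<le> 1 + S / 2"
      using norm_blinfun_id_le[where 'a='a] by linarith
  qed
  then show ?thesis by simp
qed

lemma linearized_time_lipschitz:
  assumes "s \<in> {0..T}" "t \<in> {0..T}"
  shows "norm (linearized x t - linearized x s) \<le> (2 * K) * \<bar>t - s\<bar>"
proof -
  have "norm (DV u (trajectory x u) o\<^sub>L linearized x u) \<le> K * 2" if "u \<in> {0..T}" for u
    using norm_DV_compose_le[OF that] mult_left_mono[OF norm_linearized_le[OF that] K_nonneg]
    by (rule order_trans)
  from norm_integral_upto_increment_le[OF continuous_on_linearized_integrand assms this]
  show ?thesis by (simp add: linearized_eq[OF assms(1)] linearized_eq[OF assms(2)])
qed

lemma trajectory_lipschitz:
  assumes "t \<in> {0..T}"
  shows "norm (trajectory x t - trajectory x' t) \<le> 2 * norm (x - x')"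
proof (rule norm_le_half_sup_absorb[OF _ T_nonneg _ assms])
  show "continuous_on {0..T} (\<lambda>t. trajectory x t - trajectory x' t)"
    using continuous_on_trajectory by (intro continuous_intros)
  fix S t assume "0 \<le> S" and S: "\<And>s. s \<in> {0..T} \<Longrightarrow> norm (trajectory x s - trajectory x' s) \<le> S"
    and t: "t \<in> {0..T}"
  have "trajectory x t - trajectory x' t
      = (x - x') + integral {0..t} (\<lambda>s. V s (trajectory x s) - V s (trajectory x' s))"
    using integral_upto_diff[OF continuous_on_V_trajectory continuous_on_V_trajectory t]
    by (simp add: trajectory_eq[OF t])
  then have "norm (trajectory x t - trajectory x' t)
      \<le> norm (x - x') + norm (integral {0..t} (\<lambda>s. V s (trajectory x s) - V s (trajectory x' s)))"
    by (simp only: norm_triangle_ineq)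
  moreover have "norm (integral {0..t} (\<lambda>s. V s (trajectory x s) - V s (trajectory x' s))) \<le> (K * S) * t"
  proof (rule norm_integral_upto_le[OF _ t])
    show "continuous_on {0..T} (\<lambda>s. V s (trajectory x s) - V s (trajectory x' s))"
      using continuous_on_V_trajectory by (intro continuous_intros)
    fix s assume "s \<in> {0..t}"
    then have s: "s \<in> {0..T}" using t by auto
    show "norm (V s (trajectory x s) - V s (trajectory x' s)) \<le> K * S"
      using V_lipschitz[OF s] mult_left_mono[OF S[OF s] K_nonneg] by (rule order_trans)
  qed
  moreover have "(K * S) * t \<le> S / 2" by (rule short_time_factor_le_half[OF K_nonneg short_time \<open>0 \<le> S\<close> t])
  ultimately show "norm (trajectory x t - trajectory x' t) \<le> norm (x - x') + S / 2"
    by linarith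
qed

lemma linearized_lipschitz:
  assumes "t \<in> {0..T}"
  shows "norm (linearized x t - linearized x' t) \<le> 2 * (2 * norm (x - x'))"
proof (rule norm_le_half_sup_absorb[OF _ T_nonneg _ assms])
  show "continuous_on {0..T} (\<lambda>t. linearized x t - linearized x' t)"
    using continuous_on_linearized by (intro continuous_intros)
  fix S t assume "0 \<le> S" and S: "\<And>s. s \<in> {0..T} \<Longrightarrow> norm (linearized x s - linearized x' s) \<le> S"
    and t: "t \<in> {0..T}"
  let ?A = "\<lambda>x s. DV s (trajectory x s)"
  let ?f = "\<lambda>s. (?A x s o\<^sub>L linearized x s) - (?A x' s o\<^sub>L linearized x' s)"
  have "linearized x t - linearized x' t = integral {0..t} ?f"
    using integral_upto_diff[OF continuous_on_linearized_integrand continuous_on_linearized_integrand t]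
    by (simp add: linearized_eq[OF t])
  moreover have "norm (integral {0..t} ?f) \<le> (K * (4 * norm (x - x')) + K * S) * t"
  proof (rule norm_integral_upto_le[OF _ t])
    show "continuous_on {0..T} ?f"
      by (rule continuous_on_diff[OF continuous_on_linearized_integrand continuous_on_linearized_integrand])
    fix s assume "s \<in> {0..t}"
    then have s: "s \<in> {0..T}" using t by auto
    have "?f s = ((?A x s - ?A x' s) o\<^sub>L linearized x s) + ((?A x' s o\<^sub>L linearized x s) - (?A x' s o\<^sub>L linearized x' s))"
      by (rule blinfun_eqI) (simp add: blinfun.diff_left blinfun.diff_right blinfun.add_left)
    then have "norm (?f s) \<le> norm ((?A x s - ?A x' s) o\<^sub>L linearized x s)
        + norm ((?A x' s o\<^sub>L linearized x s) - (?A x' s o\<^sub>L linearized x' s))"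
      by (simp only: norm_triangle_ineq)
    also have "\<dots> \<le> norm (?A x s - ?A x' s) * norm (linearized x s)
        + norm (?A x' s) * norm (linearized x s - linearized x' s)"
      by (intro add_mono norm_blinfun_compose norm_blinfun_compose_diff_le)
    also have "\<dots> \<le> (K * (2 * norm (x - x'))) * 2 + K * S"
    proof (intro add_mono mult_mono)
      show "norm (?A x s - ?A x' s) \<le> K * (2 * norm (x - x'))"
        using DV_lipschitz[OF s] mult_left_mono[OF trajectory_lipschitz[OF s] K_nonneg] by (rule order_trans)
    qed (use norm_linearized_le[OF s] S[OF s] DV_bound[OF s] K_nonneg in auto)
    finally show "norm (?f s) \<le> K * (4 * norm (x - x')) + K * S" by simp
  qed
  moreover have "(K * (4 * norm (x - x')) + K * S) * t \<le> 4 * norm (x - x') / 2 + S / 2"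
    using short_time_factor_le_half[OF K_nonneg short_time _ t, of "4 * norm (x - x')"]
      short_time_factor_le_half[OF K_nonneg short_time \<open>0 \<le> S\<close> t]
    by (simp add: algebra_simps)
  ultimately show "norm (linearized x t - linearized x' t) \<le> 2 * norm (x - x') + S / 2"
    by simp
qed

lemma linearized_apply:
  "t \<in> {0..T} \<Longrightarrow> linearized x t v = v + integral {0..t} (\<lambda>s. DV s (trajectory x s) (linearized x s v))"
  by (subst linearized_eq)
    (simp_all add: blinfun.add_left blinfun_apply_integral_upto[OF continuous_on_linearized_integrand])

text \<open>The remainder of the linearization obeys the same integral inequality as the trajectories
  themselves, with the Taylor error \<open>K |trajectory y s - trajectory x s|\<^sup>2\<close> as source term.\<close>

lemma trajectory_linearization_error_le:
  assumes "t \<in> {0..T}"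
  shows "norm (trajectory y t - trajectory x t - linearized x t (y - x)) \<le> 2 * (2 * norm (y - x) ^ 2)"
proof (rule norm_le_half_sup_absorb[OF _ T_nonneg _ assms])
  let ?h = "y - x"
  let ?g = "\<lambda>s. trajectory y s - trajectory x s - linearized x s ?h"
  show "continuous_on {0..T} ?g"
    using continuous_on_trajectory continuous_on_linearized by (intro continuous_intros)
  fix S t assume "0 \<le> S" and S: "\<And>s. s \<in> {0..T} \<Longrightarrow> norm (?g s) \<le> S" and t: "t \<in> {0..T}"
  let ?A = "\<lambda>s. DV s (trajectory x s)"
  let ?f = "\<lambda>s. V s (trajectory y s) - V s (trajectory x s) - ?A s (linearized x s ?h)"
  have cont_lin: "continuous_on {0..T} (\<lambda>s. ?A s (linearized x s ?h))"
    using continuous_on_DV_along[OF continuous_on_trajectory] continuous_on_linearized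
    by (intro continuous_intros)
  have "?g t = integral {0..t} ?f"
    using integral_upto_diff[OF continuous_on_V_trajectory continuous_on_V_trajectory t]
      integral_upto_diff[OF _ cont_lin t, of "\<lambda>s. V s (trajectory y s) - V s (trajectory x s)"]
      continuous_on_V_trajectory
    by (simp add: trajectory_eq[OF t] linearized_apply[OF t] continuous_on_diff)
  moreover have "norm (integral {0..t} ?f) \<le> (K * (4 * norm ?h ^ 2) + K * S) * t"
  proof (rule norm_integral_upto_le[OF _ t])
    show "continuous_on {0..T} ?f"
      by (intro continuous_on_diff continuous_on_V_trajectory cont_lin)
    fix s assume "s \<in> {0..t}"
    then have s: "s \<in> {0..T}" using t by auto
    let ?r = "V s (trajectory y s) - V s (trajectory x s) - ?A s (trajectory y s - trajectory x s)"
    have "?A s (?g s) = ?A s (trajectory y s - trajectory x s) - ?A s (linearized x s ?h)"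
      by (simp only: blinfun.diff_right)
    then have "?f s = ?r + ?A s (?g s)" by (simp add: algebra_simps)
    then have "norm (?f s) \<le> norm ?r + norm (?A s (?g s))" by (simp only: norm_triangle_ineq)
    also have "\<dots> \<le> K * (4 * norm ?h ^ 2) + K * S"
    proof (rule add_mono)
      have "norm ?r \<le> K * norm (trajectory y s - trajectory x s) ^ 2"
        by (rule norm_linearization_error_le[OF V_derivative[OF s] DV_lipschitz[OF s] K_nonneg])
      also have "\<dots> \<le> K * (2 * norm ?h) ^ 2"
        using trajectory_lipschitz[OF s, of y x] K_nonneg by (intro mult_left_mono power_mono) auto
      finally show "norm ?r \<le> K * (4 * norm ?h ^ 2)" by (simp add: power2_eq_square)
      have "norm (?A s (?g s)) \<le> norm (?A s) * norm (?g s)" by (rule norm_blinfun)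
      also have "\<dots> \<le> K * S" using DV_bound[OF s] S[OF s] K_nonneg by (intro mult_mono) auto
      finally show "norm (?A s (?g s)) \<le> K * S" .
    qed
    finally show "norm (?f s) \<le> K * (4 * norm ?h ^ 2) + K * S" .
  qed
  moreover have "(K * (4 * norm ?h ^ 2) + K * S) * t \<le> 4 * norm ?h ^ 2 / 2 + S / 2"
    using short_time_factor_le_half[OF K_nonneg short_time _ t, of "4 * norm ?h ^ 2"]
      short_time_factor_le_half[OF K_nonneg short_time \<open>0 \<le> S\<close> t]
    by (simp add: algebra_simps)
  ultimately show "norm (?g t) \<le> 2 * norm ?h ^ 2 + S / 2"
    by simp
qed

lemma trajectory_has_derivative:
  assumes "t \<in> {0..T}"
  shows "((\<lambda>x. trajectory x t) has_derivative blinfun_apply (linearized x t)) (at x)"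
  unfolding has_derivative_at_alt
proof (intro conjI allI impI exI[of _ "e/4" for e])
  fix e :: real assume e: "e > 0"
  then show "e/4 > 0" by simp
  fix y assume y: "norm (y - x) < e/4"
  have "norm (trajectory y t - trajectory x t - linearized x t (y - x)) \<le> 4 * norm (y - x) * norm (y - x)"
    using trajectory_linearization_error_le[OF assms, of y x] by (simp add: power2_eq_square)
  also have "\<dots> \<le> e * norm (y - x)" using y by (intro mult_right_mono) auto
  finally show "norm (trajectory y t - trajectory x t - linearized x t (y - x)) \<le> e * norm (y - x)" .
qed (rule blinfun.bounded_linear_right)

end

section \<open>Transposed Jacobians and the weak norm\<close>

lemma adjoint_blinfun_eq:
  "adjoint (blinfun_apply (m :: (real^'n) \<Rightarrow>\<^sub>L (real^'n))) w = (\<chi> i. m (axis i 1) \<bullet> w)"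
proof -
  have "linear (blinfun_apply m)" by (simp add: blinfun.bounded_linear_right bounded_linear.linear)
  then have "adjoint (blinfun_apply m) w $ i = m (axis i 1) \<bullet> w" for i
    using adjoint_works[of "blinfun_apply m" "axis i 1" w] by (simp add: inner_axis' inner_commute)
  then show ?thesis by (simp add: vec_eq_iff)
qed

lemma linear_adjoint_blinfun: "linear (adjoint (blinfun_apply (m :: (real^'n) \<Rightarrow>\<^sub>L (real^'n))))"
  by (intro adjoint_linear bounded_linear.linear blinfun.bounded_linear_right)

lemma adjoint_blinfun_diff:
  "adjoint (blinfun_apply (m :: (real^'n) \<Rightarrow>\<^sub>L (real^'n))) w - adjoint (blinfun_apply m') w
   = adjoint (blinfun_apply (m - m')) w"
  by (simp add: adjoint_blinfun_eq vec_eq_iff blinfun.diff_left inner_diff_left)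

lemma norm_adjoint_blinfun_le:
  "norm (adjoint (blinfun_apply (m :: (real^'n) \<Rightarrow>\<^sub>L (real^'n))) w) \<le> norm m * norm w"
proof -
  let ?a = "adjoint (blinfun_apply m) w"
  have "norm ?a * norm ?a = ?a \<bullet> ?a" by (simp flip: power2_norm_eq_inner power2_eq_square)
  also have "\<dots> = m ?a \<bullet> w"
    using adjoint_works[OF bounded_linear.linear[OF blinfun.bounded_linear_right[of m]], of ?a w] by simp
  also have "\<dots> \<le> norm (m ?a) * norm w" by (rule norm_cauchy_schwarz)
  also have "\<dots> \<le> norm ?a * (norm m * norm w)"
    using mult_right_mono[OF norm_blinfun[of m ?a] norm_ge_zero[of w]] by (simp add: algebra_simps)
  finally show ?thesis
    by (cases "norm ?a = 0") (auto simp: mult_le_cancel_left)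
qed

lemma transpose_matrix_blinfun_mult:
  "transpose (matrix (blinfun_apply (m :: (real^'n) \<Rightarrow>\<^sub>L (real^'n)))) *v w = adjoint (blinfun_apply m) w"
proof -
  have "linear (blinfun_apply m)" by (simp add: blinfun.bounded_linear_right bounded_linear.linear)
  then have "transpose (matrix (blinfun_apply m)) = matrix (adjoint (blinfun_apply m))"
    by (simp add: matrix_adjoint)
  then show ?thesis by (simp add: matrix_works linear_adjoint_blinfun)
qed

lemma weak_norm_leI:
  fixes \<eta> :: "'d::finite meas"
  assumes "\<And>\<theta> L. L-lipschitz_on UNIV (apply_bcontfun \<theta>) \<Longrightarrow> norm \<theta> + L \<le> 1 \<Longrightarrow> \<eta> \<theta> \<le> c"
  shows "weak_norm \<eta> \<le> c"
  unfolding weak_norm_def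
proof (rule cSUP_least)
  show "{\<theta>. \<exists>L. L-lipschitz_on UNIV (apply_bcontfun \<theta>) \<and> norm \<theta> + L \<le> 1} \<noteq> {}"
    by (auto intro!: exI[of _ 0] exI[of _ 0] lipschitz_onI)
qed (use assms in blast)

lemma weak_norm_le_norm: "weak_norm (\<eta> :: 'd::finite meas) \<le> norm \<eta>"
proof (rule weak_norm_leI)
  fix \<theta> :: "(real^'d) \<Rightarrow>\<^sub>C (real^'d)" and L assume "L-lipschitz_on UNIV (apply_bcontfun \<theta>)" "norm \<theta> + L \<le> 1"
  then have "norm \<theta> \<le> 1" using lipschitz_on_nonneg by force
  have "\<eta> \<theta> \<le> norm \<eta> * norm \<theta>" using norm_blinfun[of \<eta> \<theta>] by simp
  also have "\<dots> \<le> norm \<eta>" using \<open>norm \<theta> \<le> 1\<close> mult_left_le[of "norm \<theta>" "norm \<eta>"] by simp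
  finally show "\<eta> \<theta> \<le> norm \<eta>" .
qed

section \<open>Push-forward along the flow\<close>

locale driven_flow = time_dependent_field "\<lambda>s. B (\<xi> s)" "\<lambda>s. DB (\<xi> s)" K T
  for B :: "'d::finite meas \<Rightarrow> real^'d \<Rightarrow> real^'d"
    and \<xi> :: "real \<Rightarrow> 'd meas"
    and DB :: "'d meas \<Rightarrow> real^'d \<Rightarrow> (real^'d) \<Rightarrow>\<^sub>L (real^'d)"
    and K T :: real
begin

lemma is_flow_trajectory: "is_flow B \<xi> T (\<lambda>t x. trajectory x t)"
  unfolding is_flow_def
proof (intro allI conjI ballI)
  fix x
  show "trajectory x 0 = x" using trajectory_eq[of 0 x] T_nonneg by simp
  fix t assume t: "t \<in> {0..T}"
  have "((\<lambda>t. x + integral {0..t} (\<lambda>s. B (\<xi> s) (trajectory x s))) has_vector_derivative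
      B (\<xi> t) (trajectory x t)) (at t within {0..T})"
    using has_vector_derivative_add[OF has_vector_derivative_const
        integral_has_vector_derivative[OF continuous_on_V_trajectory t]] by simp
  then show "((\<lambda>s. trajectory x s) has_vector_derivative B (\<xi> t) (trajectory x t)) (at t within {0..T})"
    by (rule has_vector_derivative_transform[OF t, rotated]) (rule trajectory_eq)
qed

text \<open>\<open>flow\<close> picks an arbitrary solution; uniqueness of the integral equation identifies it.\<close>

lemma flow_eq_trajectory:
  assumes t: "t \<in> {0..T}"
  shows "flow B \<xi> T t x = trajectory x t"
proof -
  let ?p = "flow B \<xi> T"
  have "is_flow B \<xi> T ?p" unfolding flow_def by (rule someI[of "is_flow B \<xi> T", OF is_flow_trajectory])
  then have deriv: "\<And>s. s \<in> {0..T} \<Longrightarrow> ((\<lambda>s. ?p s x) has_vector_derivative B (\<xi> s) (?p s x)) (at s within {0..T})"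
    and start: "?p 0 x = x" unfolding is_flow_def by auto
  have cont: "continuous_on {0..T} (\<lambda>s. ?p s x)"
    unfolding continuous_on_eq_continuous_within using deriv by (blast intro: has_vector_derivative_continuous)
  have "?p t x = x + integral {0..t} (\<lambda>s. B (\<xi> s) (?p s x))" if t: "t \<in> {0..T}" for t
  proof -
    have "((\<lambda>s. B (\<xi> s) (?p s x)) has_integral ?p t x - ?p 0 x) {0..t}"
    proof (rule fundamental_theorem_of_calculus)
      fix s assume "s \<in> {0..t}"
      with t show "((\<lambda>s. ?p s x) has_vector_derivative B (\<xi> s) (?p s x)) (at s within {0..t})"
        by (intro has_vector_derivative_within_subset[OF deriv]) auto
    qed (use t in simp)
    then have "integral {0..t} (\<lambda>s. B (\<xi> s) (?p s x)) = ?p t x - x"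
      unfolding start by (rule integral_unique)
    then show ?thesis by simp
  qed
  then show ?thesis by (rule trajectory_unique[OF cont _ t])
qed

lemma transpose_jacobian_flow:
  assumes t: "t \<in> {0..T}"
  shows "transpose (jacobian (flow B \<xi> T t) (at x)) *v w = adjoint (blinfun_apply (linearized x t)) w"
proof -
  have "flow B \<xi> T t = (\<lambda>x. trajectory x t)" using flow_eq_trajectory[OF t] by auto
  then have "jacobian (flow B \<xi> T t) (at x) = matrix (blinfun_apply (linearized x t))"
    unfolding jacobian_def using frechet_derivative_at[OF trajectory_has_derivative[OF t]] by simp
  then show ?thesis by (simp only: transpose_matrix_blinfun_mult)
qed

definition push_field_along :: "real \<Rightarrow> ((real^'d) \<Rightarrow>\<^sub>C (real^'d)) \<Rightarrow> real^'d \<Rightarrow> real^'d" where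
  "push_field_along t \<theta> x = adjoint (blinfun_apply (linearized x t)) (\<theta> (trajectory x t))"

lemma norm_push_field_along_le:
  assumes "t \<in> {0..T}"
  shows "norm (push_field_along t \<theta> x) \<le> 2 * norm \<theta>"
proof -
  have "norm (push_field_along t \<theta> x) \<le> norm (linearized x t) * norm (\<theta> (trajectory x t))"
    unfolding push_field_along_def by (rule norm_adjoint_blinfun_le)
  also have "\<dots> \<le> 2 * norm \<theta>"
    using norm_linearized_le[OF assms] by (intro mult_mono norm_bounded) auto
  finally show ?thesis .
qed

lemma push_field_along_bcontfun:
  assumes t: "t \<in> {0..T}"
  shows "push_field_along t \<theta> \<in> bcontfun"
proof -
  have "continuous_on UNIV (\<lambda>x. linearized x t)"
    by (rule lipschitz_on_continuous_on[of 4], rule lipschitz_onI)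
      (use linearized_lipschitz[OF t] in \<open>auto simp: dist_norm\<close>)
  moreover have "continuous_on UNIV (\<lambda>x. trajectory x t)"
    by (rule lipschitz_on_continuous_on[of 2], rule lipschitz_onI)
      (use trajectory_lipschitz[OF t] in \<open>auto simp: dist_norm\<close>)
  then have "continuous_on UNIV (\<lambda>x. \<theta> (trajectory x t))"
    by (rule continuous_on_compose2[OF continuous_on_apply_bcontfun]) auto
  ultimately have "continuous_on UNIV (push_field_along t \<theta>)"
    unfolding push_field_along_def adjoint_blinfun_eq
    by (intro continuous_on_vec_lambda continuous_intros)
  moreover have "bounded (range (push_field_along t \<theta>))"
    unfolding bounded_iff using norm_push_field_along_le[OF t] by blast
  ultimately show ?thesis unfolding bcontfun_def by auto
qed

lemma apply_push_field_flow:
  "t \<in> {0..T} \<Longrightarrow> apply_bcontfun (push_field (flow B \<xi> T t) \<theta>) = push_field_along t \<theta>"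
  unfolding push_field_def transpose_jacobian_flow flow_eq_trajectory
  by (simp add: push_field_along_bcontfun Bcontfun_inverse flip: push_field_along_def)

lemma norm_push_field_flow_le: "t \<in> {0..T} \<Longrightarrow> norm (push_field (flow B \<xi> T t) \<theta>) \<le> 2 * norm \<theta>"
  by (rule norm_bound) (simp add: apply_push_field_flow norm_push_field_along_le)

lemma Gamma_apply:
  assumes t: "t \<in> {0..T}"
  shows "Gamma B T \<xi>0 \<xi> t \<theta> = \<xi>0 (push_field (flow B \<xi> T t) \<theta>)"
proof -
  let ?P = "push_field (flow B \<xi> T t)"
  have add: "?P (a + b) = ?P a + ?P b" for a b
    by (rule bcontfun_eqI)
      (simp add: apply_push_field_flow[OF t] push_field_along_def linear_add[OF linear_adjoint_blinfun])
  have scale: "?P (r *\<^sub>R a) = r *\<^sub>R ?P a" for r a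
    by (rule bcontfun_eqI)
      (simp add: apply_push_field_flow[OF t] push_field_along_def linear_scale[OF linear_adjoint_blinfun])
  have "bounded_linear (\<lambda>\<theta>. \<xi>0 (?P \<theta>))"
  proof (rule bounded_linear_intro[where K = "2 * norm \<xi>0"])
    fix a
    have "norm (\<xi>0 (push_field (flow B \<xi> T t) a)) \<le> norm \<xi>0 * norm (push_field (flow B \<xi> T t) a)"
      by (rule norm_blinfun)
    also have "\<dots> \<le> norm a * (2 * norm \<xi>0)"
      using mult_left_mono[OF norm_push_field_flow_le[OF t] norm_ge_zero] by (simp add: algebra_simps)
    finally show "norm (\<xi>0 (push_field (flow B \<xi> T t) a)) \<le> norm a * (2 * norm \<xi>0)" .
  qed (simp_all add: add scale blinfun.add_right blinfun.scaleR_right)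
  then show ?thesis unfolding Gamma_def push_meas_def by (simp add: bounded_linear_Blinfun_apply)
qed

lemma norm_Gamma_le: "t \<in> {0..T} \<Longrightarrow> norm (Gamma B T \<xi>0 \<xi> t) \<le> 2 * norm \<xi>0"
proof (rule norm_blinfun_bound)
  fix \<theta> assume t: "t \<in> {0..T}"
  have "norm (\<xi>0 (push_field (flow B \<xi> T t) \<theta>)) \<le> norm \<xi>0 * norm (push_field (flow B \<xi> T t) \<theta>)"
    by (rule norm_blinfun)
  also have "\<dots> \<le> norm \<xi>0 * (2 * norm \<theta>)"
    by (intro mult_left_mono norm_push_field_flow_le t) simp
  finally show "norm (Gamma B T \<xi>0 \<xi> t \<theta>) \<le> 2 * norm \<xi>0 * norm \<theta>"
    by (simp add: Gamma_apply[OF t] algebra_simps)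
qed simp

text \<open>Time regularity of the push-forward holds only against Lipschitz test fields, which is why
  continuity of \<open>Gamma\<close> is obtained for the weak norm.\<close>

lemma push_field_along_time_lipschitz:
  assumes s: "s \<in> {0..T}" and t: "t \<in> {0..T}"
    and L: "L-lipschitz_on UNIV (apply_bcontfun \<theta>)" "norm \<theta> + L \<le> 1"
  shows "norm (push_field_along s \<theta> x - push_field_along t \<theta> x) \<le> (2 * K) * \<bar>s - t\<bar>"
proof -
  let ?ws = "\<theta> (trajectory x s)" and ?wt = "\<theta> (trajectory x t)"
  have "push_field_along s \<theta> x - push_field_along t \<theta> x
      = adjoint (blinfun_apply (linearized x s - linearized x t)) ?ws
        + adjoint (blinfun_apply (linearized x t)) (?ws - ?wt)"
    unfolding push_field_along_def adjoint_blinfun_diff[symmetric] linear_diff[OF linear_adjoint_blinfun]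
    by simp
  then have "norm (push_field_along s \<theta> x - push_field_along t \<theta> x)
      \<le> norm (linearized x s - linearized x t) * norm ?ws + norm (linearized x t) * norm (?ws - ?wt)"
    by (metis norm_triangle_le add_mono norm_adjoint_blinfun_le)
  also have "\<dots> \<le> ((2 * K) * \<bar>s - t\<bar>) * norm \<theta> + 2 * (L * (K * \<bar>s - t\<bar>))"
  proof (rule add_mono)
    show "norm (linearized x s - linearized x t) * norm ?ws \<le> ((2 * K) * \<bar>s - t\<bar>) * norm \<theta>"
      using linearized_time_lipschitz[OF t s] K_nonneg by (intro mult_mono norm_bounded) auto
    have "norm (?ws - ?wt) \<le> L * norm (trajectory x s - trajectory x t)"
      using lipschitz_onD[OF L(1)] by (simp add: dist_norm)
    also have "\<dots> \<le> L * (K * \<bar>s - t\<bar>)"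
      using trajectory_time_lipschitz[OF t s] lipschitz_on_nonneg[OF L(1)] by (intro mult_left_mono) auto
    finally show "norm (linearized x t) * norm (?ws - ?wt) \<le> 2 * (L * (K * \<bar>s - t\<bar>))"
      using norm_linearized_le[OF t] by (intro mult_mono) auto
  qed
  also have "\<dots> = ((2 * K) * \<bar>s - t\<bar>) * (norm \<theta> + L)" by (simp add: algebra_simps)
  also have "\<dots> \<le> (2 * K) * \<bar>s - t\<bar>" using L(2) K_nonneg by (simp add: mult_left_le)
  finally show ?thesis .
qed

lemma weak_norm_Gamma_diff_le:
  assumes s: "s \<in> {0..T}" and t: "t \<in> {0..T}"
  shows "weak_norm (Gamma B T \<xi>0 \<xi> s - Gamma B T \<xi>0 \<xi> t) \<le> (norm \<xi>0 * (2 * K)) * \<bar>s - t\<bar>"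
proof (rule weak_norm_leI)
  fix \<theta> :: "(real^'d) \<Rightarrow>\<^sub>C (real^'d)" and L :: real
  assume L: "L-lipschitz_on UNIV (apply_bcontfun \<theta>)" "norm \<theta> + L \<le> 1"
  let ?d = "push_field (flow B \<xi> T s) \<theta> - push_field (flow B \<xi> T t) \<theta>"
  have "norm ?d \<le> (2 * K) * \<bar>s - t\<bar>"
    by (rule norm_bound)
      (simp add: apply_push_field_flow[OF s] apply_push_field_flow[OF t] push_field_along_time_lipschitz[OF s t L])
  have "(Gamma B T \<xi>0 \<xi> s - Gamma B T \<xi>0 \<xi> t) \<theta> = \<xi>0 ?d"
    by (simp add: blinfun.diff_left Gamma_apply[OF s] Gamma_apply[OF t] blinfun.diff_right)
  also have "\<dots> \<le> norm \<xi>0 * norm ?d" using norm_blinfun[of \<xi>0 ?d] by simp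
  also have "\<dots> \<le> norm \<xi>0 * ((2 * K) * \<bar>s - t\<bar>)"
    using \<open>norm ?d \<le> (2 * K) * \<bar>s - t\<bar>\<close> by (intro mult_left_mono) auto
  finally show "(Gamma B T \<xi>0 \<xi> s - Gamma B T \<xi>0 \<xi> t) \<theta> \<le> (norm \<xi>0 * (2 * K)) * \<bar>s - t\<bar>"
    by (simp add: algebra_simps)
qed

lemma weak_cont_Gamma: "weak_cont T (Gamma B T \<xi>0 \<xi>)"
  unfolding weak_cont_def
proof (intro ballI allI impI)
  fix t e assume t: "t \<in> {0..T}" and e: "(0::real) < e"
  let ?c = "norm \<xi>0 * (2 * K)"
  have c: "0 \<le> ?c" using K_nonneg by simp
  show "\<exists>d>0. \<forall>s\<in>{0..T}. \<bar>s - t\<bar> < d \<longrightarrow> weak_norm (Gamma B T \<xi>0 \<xi> s - Gamma B T \<xi>0 \<xi> t) < e"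
  proof (intro exI[of _ "e / (?c + 1)"] conjI ballI impI)
    show "e / (?c + 1) > 0" using e c by (simp add: add_nonneg_pos)
    fix s assume s: "s \<in> {0..T}" and d: "\<bar>s - t\<bar> < e / (?c + 1)"
    have "?c * \<bar>s - t\<bar> \<le> ?c * (e / (?c + 1))" using d c by (intro mult_left_mono) auto
    also have "\<dots> < e" using c e by (simp add: field_simps)
    finally show "weak_norm (Gamma B T \<xi>0 \<xi> s - Gamma B T \<xi>0 \<xi> t) < e"
      using weak_norm_Gamma_diff_le[OF s t, of \<xi>0] by linarith
  qed
qed

end

section \<open>The standing assumptions\<close>

lemma norm_le_supn:
  fixes f :: "real^'d::finite \<Rightarrow> 'b::real_normed_vector"
  assumes "bounded (range f)"
  shows "norm (f x) \<le> supn f"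
proof -
  have "bdd_above (range (\<lambda>x. norm (f x)))"
    using assms by (intro bounded_imp_bdd_above) (simp add: bounded_norm_comp image_image[symmetric])
  then show ?thesis unfolding supn_def by (intro cSUP_upper) auto
qed

lemma supn_nonneg:
  fixes f :: "real^'d::finite \<Rightarrow> 'b::real_normed_vector"
  shows "bounded (range f) \<Longrightarrow> 0 \<le> supn f"
  using norm_le_supn[of f 0] by (rule order_trans[OF norm_ge_zero])

lemma uniformly_continuous_in_time_if_weak_cont:
  assumes "weak_cont T \<xi>" "0 < C"
    and F_lipschitz: "\<And>\<eta> \<eta>' u. norm (F \<eta> u - F \<eta>' u) \<le> C * weak_norm (\<eta> - \<eta>')"
    and s0: "s0 \<in> {0..T}" and e: "e > 0"
  shows "\<exists>d>0. \<forall>s\<in>{0..T}. \<bar>s - s0\<bar> < d \<longrightarrow> (\<forall>u. norm (F (\<xi> s) u - F (\<xi> s0) u) \<le> e)"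
proof -
  have "e / C > 0" using e \<open>0 < C\<close> by simp
  then obtain d where "d > 0" and d: "\<forall>s\<in>{0..T}. \<bar>s - s0\<bar> < d \<longrightarrow> weak_norm (\<xi> s - \<xi> s0) < e / C"
    using assms(1) s0 unfolding weak_cont_def by blast
  have "norm (F (\<xi> s) u - F (\<xi> s0) u) \<le> e" if "s \<in> {0..T}" "\<bar>s - s0\<bar> < d" for s u
  proof -
    have "norm (F (\<xi> s) u - F (\<xi> s0) u) \<le> C * weak_norm (\<xi> s - \<xi> s0)" by (rule F_lipschitz)
    also have "\<dots> \<le> C * (e / C)" using d that \<open>0 < C\<close> by (intro mult_left_mono) auto
    finally show ?thesis using \<open>0 < C\<close> by simp
  qed
  with \<open>d > 0\<close> show ?thesis by blast
qed

lemma standing_obtains_driven_flow: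
  fixes B :: "'d::finite meas \<Rightarrow> real^'d \<Rightarrow> real^'d"
  assumes "standing B"
  obtains C DB where "0 < C"
    and "\<And>(\<xi> :: real \<Rightarrow> 'd meas) R T. 0 \<le> T \<Longrightarrow> C * (\<bar>R\<bar> + 1) * T \<le> 1/2 \<Longrightarrow> weak_cont T \<xi> \<Longrightarrow>
      (\<forall>t\<in>{0..T}. weak_norm (\<xi> t) \<le> R) \<Longrightarrow> driven_flow B \<xi> DB (C * (\<bar>R\<bar> + 1)) T"
proof -
  obtain C DB D2B where "0 < C"
    and B_deriv: "\<And>\<eta> x. (B \<eta> has_derivative blinfun_apply (DB \<eta> x)) (at x)"
    and DB_deriv: "\<And>\<eta> x. (DB \<eta> has_derivative blinfun_apply (D2B \<eta> x)) (at x)"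
    and bdd: "\<And>\<eta>. bounded (range (B \<eta>)) \<and> bounded (range (DB \<eta>)) \<and> bounded (range (D2B \<eta>))"
    and supn_bound: "\<And>\<eta>. supn (B \<eta>) + supn (DB \<eta>) + supn (D2B \<eta>) \<le> C * (weak_norm \<eta> + 1)"
    and B_lip: "\<And>\<eta> \<eta>'. supn (\<lambda>x. B \<eta> x - B \<eta>' x) \<le> C * weak_norm (\<eta> - \<eta>')"
    and DB_lip: "\<And>\<eta> \<eta>'. supn (\<lambda>x. DB \<eta> x - DB \<eta>' x) \<le> C * weak_norm (\<eta> - \<eta>')"
    using assms unfolding standing_def by blast
  have B_diff: "norm (B \<eta> u - B \<eta>' u) \<le> C * weak_norm (\<eta> - \<eta>')" for \<eta> \<eta>' u
  proof -
    have "bounded (range (\<lambda>x. B \<eta> x - B \<eta>' x))" using bdd by (intro bounded_minus_comp) auto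
    then have "norm (B \<eta> u - B \<eta>' u) \<le> supn (\<lambda>x. B \<eta> x - B \<eta>' x)" by (rule norm_le_supn)
    then show ?thesis using B_lip by (rule order_trans)
  qed
  have DB_diff: "norm (DB \<eta> u - DB \<eta>' u) \<le> C * weak_norm (\<eta> - \<eta>')" for \<eta> \<eta>' u
  proof -
    have "bounded (range (\<lambda>x. DB \<eta> x - DB \<eta>' x))" using bdd by (intro bounded_minus_comp) auto
    then have "norm (DB \<eta> u - DB \<eta>' u) \<le> supn (\<lambda>x. DB \<eta> x - DB \<eta>' x)" by (rule norm_le_supn)
    then show ?thesis using DB_lip by (rule order_trans)
  qed
  have sup_nonneg: "0 \<le> supn (B \<eta>)" "0 \<le> supn (DB \<eta>)" "0 \<le> supn (D2B \<eta>)" for \<eta>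
    using bdd[of \<eta>] by (auto intro: supn_nonneg)
  have norm_le_sup: "norm (B \<eta> x) \<le> supn (B \<eta>)" "norm (DB \<eta> x) \<le> supn (DB \<eta>)"
    "norm (D2B \<eta> x) \<le> supn (D2B \<eta>)" for \<eta> x
    using bdd[of \<eta>] by (auto intro: norm_le_supn)
  show ?thesis
  proof (rule that[OF \<open>0 < C\<close>])
    fix \<xi> :: "real \<Rightarrow> 'd meas" and R T :: real
    assume "0 \<le> T" "C * (\<bar>R\<bar> + 1) * T \<le> 1/2" and \<xi>: "weak_cont T \<xi>"
      and R: "\<forall>t\<in>{0..T}. weak_norm (\<xi> t) \<le> R"
    let ?K = "C * (\<bar>R\<bar> + 1)"
    have sum_le: "supn (B (\<xi> s)) + supn (DB (\<xi> s)) + supn (D2B (\<xi> s)) \<le> ?K" if "s \<in> {0..T}" for s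
    proof -
      have "weak_norm (\<xi> s) \<le> R" using R that by blast
      then have "C * (weak_norm (\<xi> s) + 1) \<le> ?K" using \<open>0 < C\<close> by (intro mult_left_mono) auto
      with supn_bound show ?thesis by (rule order_trans)
    qed
    show "driven_flow B \<xi> DB ?K T"
    proof unfold_locales
      show "0 \<le> ?K" using \<open>0 < C\<close> by simp
      show "0 \<le> T" "?K * T \<le> 1/2" by fact+
    next
      fix s x assume s: "s \<in> {0..T}"
      show "norm (B (\<xi> s) x) \<le> ?K"
        using sum_le[OF s] sup_nonneg[of "\<xi> s"] norm_le_sup[of "\<xi> s" x] by linarith
    next
      fix s x assume s: "s \<in> {0..T}"
      show "norm (DB (\<xi> s) x) \<le> ?K"
        using sum_le[OF s] sup_nonneg[of "\<xi> s"] norm_le_sup[of "\<xi> s" x] by linarith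
    next
      fix s x
      show "(B (\<xi> s) has_derivative blinfun_apply (DB (\<xi> s) x)) (at x)" by (rule B_deriv)
    next
      fix s x y assume s: "s \<in> {0..T}"
      have "norm (D2B (\<xi> s) z) \<le> ?K" for z
        using sum_le[OF s] sup_nonneg[of "\<xi> s"] norm_le_sup[of "\<xi> s" z] by linarith
      then show "norm (DB (\<xi> s) x - DB (\<xi> s) y) \<le> ?K * norm (x - y)"
        by (rule norm_diff_le_of_derivative_bound[OF DB_deriv])
    next
      fix s0 e :: real assume "s0 \<in> {0..T}" "0 < e"
      then show "\<exists>d>0. \<forall>s\<in>{0..T}. \<bar>s - s0\<bar> < d \<longrightarrow> (\<forall>u. norm (B (\<xi> s) u - B (\<xi> s0) u) \<le> e)"
        by (rule uniformly_continuous_in_time_if_weak_cont[OF \<xi> \<open>0 < C\<close> B_diff])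
    next
      fix s0 e :: real assume "s0 \<in> {0..T}" "0 < e"
      then show "\<exists>d>0. \<forall>s\<in>{0..T}. \<bar>s - s0\<bar> < d \<longrightarrow> (\<forall>u. norm (DB (\<xi> s) u - DB (\<xi> s0) u) \<le> e)"
        by (rule uniformly_continuous_in_time_if_weak_cont[OF \<xi> \<open>0 < C\<close> DB_diff])
    qed
  qed
qed

lemma Gamma_maps_weak_ball:
  fixes B :: "'d::finite meas \<Rightarrow> real^'d \<Rightarrow> real^'d"
  assumes "standing B"
  obtains T where "0 < T"
    and "\<And>\<xi>0 (\<xi> :: real \<Rightarrow> 'd meas). R = 2 * norm \<xi>0 \<Longrightarrow> weak_cont T \<xi> \<Longrightarrow> \<forall>t\<in>{0..T}. weak_norm (\<xi> t) \<le> R \<Longrightarrow>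
           weak_cont T (Gamma B T \<xi>0 \<xi>) \<and> (\<forall>t\<in>{0..T}. norm (Gamma B T \<xi>0 \<xi> t) \<le> R)"
proof -
  obtain C DB where "0 < C" and driven: "\<And>(\<xi> :: real \<Rightarrow> 'd meas) R T. 0 \<le> T \<Longrightarrow> C * (\<bar>R\<bar> + 1) * T \<le> 1/2 \<Longrightarrow>
      weak_cont T \<xi> \<Longrightarrow> (\<forall>t\<in>{0..T}. weak_norm (\<xi> t) \<le> R) \<Longrightarrow> driven_flow B \<xi> DB (C * (\<bar>R\<bar> + 1)) T"
    using standing_obtains_driven_flow[OF assms] by blast
  define T where "T = 1 / (2 * (C * (\<bar>R\<bar> + 1)))"
  have "0 < T" "C * (\<bar>R\<bar> + 1) * T \<le> 1/2" using \<open>0 < C\<close> by (simp_all add: T_def)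
  show ?thesis
  proof (rule that[OF \<open>0 < T\<close>])
    fix \<xi>0 :: "'d meas" and \<xi> :: "real \<Rightarrow> 'd meas"
    assume R: "R = 2 * norm \<xi>0" and \<xi>: "weak_cont T \<xi>" "\<forall>t\<in>{0..T}. weak_norm (\<xi> t) \<le> R"
    interpret driven_flow B \<xi> DB "C * (\<bar>R\<bar> + 1)" T
      using \<open>0 < T\<close> by (intro driven \<xi> \<open>C * (\<bar>R\<bar> + 1) * T \<le> 1/2\<close>) simp
    show "weak_cont T (Gamma B T \<xi>0 \<xi>) \<and> (\<forall>t\<in>{0..T}. norm (Gamma B T \<xi>0 \<xi> t) \<le> R)"
      using weak_cont_Gamma norm_Gamma_le R by simp
  qed
qed

theorem lemma3p3:
  fixes B :: "('d::finite) meas \<Rightarrow> real^'d \<Rightarrow> real^'d"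
  assumes "standing B"
  shows "\<forall>R. \<exists>T>0. \<forall>\<xi>0 :: 'd meas. R = 2 * norm \<xi>0 \<longrightarrow>
           (\<forall>\<xi>. ball_strong T R \<xi> \<longrightarrow> ball_strong T R (Gamma B T \<xi>0 \<xi>)) \<and>
           (\<forall>\<xi>. ball_weak T R \<xi> \<longrightarrow> ball_weak T R (Gamma B T \<xi>0 \<xi>))"
proof (intro allI)
  fix R :: real
  obtain T where "0 < T" and Gamma: "\<And>\<xi>0 (\<xi> :: real \<Rightarrow> 'd meas). R = 2 * norm \<xi>0 \<Longrightarrow> weak_cont T \<xi> \<Longrightarrow>
      \<forall>t\<in>{0..T}. weak_norm (\<xi> t) \<le> R \<Longrightarrow>
      weak_cont T (Gamma B T \<xi>0 \<xi>) \<and> (\<forall>t\<in>{0..T}. norm (Gamma B T \<xi>0 \<xi> t) \<le> R)"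
    using Gamma_maps_weak_ball[OF assms] by blast
  have weak_le: "weak_norm \<eta> \<le> R" if "norm \<eta> \<le> R" for \<eta> :: "'d meas"
    using weak_norm_le_norm that by (rule order_trans)
  show "\<exists>T>0. \<forall>\<xi>0 :: 'd meas. R = 2 * norm \<xi>0 \<longrightarrow>
           (\<forall>\<xi>. ball_strong T R \<xi> \<longrightarrow> ball_strong T R (Gamma B T \<xi>0 \<xi>)) \<and>
           (\<forall>\<xi>. ball_weak T R \<xi> \<longrightarrow> ball_weak T R (Gamma B T \<xi>0 \<xi>))"
    using \<open>0 < T\<close> Gamma weak_le unfolding ball_strong_def ball_weak_def by blast
qed

end
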